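(* Let $\sigma=\langle\mathcal V,\mathcal C,S,B\rangle$ be an approval-based multi-winner election. Fix any run of ODH on $\sigma$ (any tie-breaking), and for $i=0,\dots,S-1$ let $\mathcal C_e^i$ be the set of the first $i$ candidates it chooses ($\mathcal C_e^0=\emptyset$). Let $c\in\mathcal C\setminus\mathcal C_e^i$, and let $\{y_1,\dots,y_n\}\subseteq2^{\mathcal C}$ be such that $c\in y_j$ for every $j=1,\dots,n$. Then $$\mathrm{maxMin}(\sigma,\mathcal C_e^i\cup\{c\})\ \ge\ \frac{\sum_{j=1}^nB(y_j)}{\big|\mathcal C_e^i\cap\bigcup_{j=1}^ny_j\big|+1}.$$
   Context: An approval-based multi-winner election is a tuple $\sigma=\langle \mathcal V,\mathcal C,S,B\rangle$, where $\mathcal V$ is a finite set of agents, $\mathcal C$ is a finite set of candidates, $1\le S\le|\mathcal C|$ is an integer, and $B:2^{\mathcal C}\to\mathbb N$ gives, for each $\mathcal A\subseteq\mathcal C$, the number $B(\mathcal A)$ of agents whose ballot is exactly $\mathcal A$ (with $\sum_{\mathcal A}B(\mathcal A)\le|\mathcal V|$). For a non-empty $\mathcal A\subseteq\mathcal C$, the family $\mathfrak F_{\sigma,\mathcal A}$ is the set of all $F:2^{\mathcal C}\times\mathcal A\to\mathbb R$ such that: - $F(y,c)\ge0$ for all $y$ and $c$; - $F(y,c)=0$ if $c\notin y$; - $\sum_{c\in\mathcal A\cap y}F(y,c)=B(y)$ whenever $y\cap\mathcal A\neq\emptyset$. We write $\mathrm{Supp}_F(c)=\sum_yF(y,c)$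 and $\mathrm{maxMin}(\sigma,\mathcal A)=\sup_{F\in\mathfrak F_{\sigma,\mathcal A}}\min_{c\in\mathcal A}\mathrm{Supp}_F(c)$. We also write $\mathfrak F^{\mathrm{opt}}_{\sigma,\mathcal A}=\{F\in\mathfrak F_{\sigma,\mathcal A}:\mathrm{Supp}_F(c)\ge\mathrm{maxMin}(\sigma,\mathcal A)\ \forall c\in\mathcal A\}$. The Open D'Hondt (ODH) rule proceeds as follows. Start with $\mathcal C_e=\emptyset$ and repeat $S$ times: - for each $c\in\mathcal C\setminus\mathcal C_e$, choose any $F\in\mathfrak F^{\mathrm{opt}}_{\sigma,\mathcal C_e\cup\{c\}}$ and set $s_c=\mathrm{Supp}_F(c)$; - then add to $\mathcal C_e$ some $w$ maximizing $s_w$ (ties broken arbitrarily). Finally, output $\mathcal C_e$. *)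

theory Defs
  imports Complex_Main
begin

text \<open>An approval-based multi-winner election: agents V, candidates C, committee size S,
  and B A = number of agents whose ballot is exactly A (for A a subset of C).\<close>
definition election :: "'v set \<Rightarrow> 'c set \<Rightarrow> nat \<Rightarrow> ('c set \<Rightarrow> nat) \<Rightarrow> bool" where
  "election V C S B \<longleftrightarrow> finite V \<and> finite C \<and> 1 \<le> S \<and> S \<le> card C \<and>
     (\<Sum>A\<in>Pow C. B A) \<le> card V"

text \<open>The family F_{sigma,A}: functions on 2^C x A (values outside are irrelevant).\<close>
definition Fam :: "'c set \<Rightarrow> ('c set \<Rightarrow> nat) \<Rightarrow> 'c set \<Rightarrow> ('c set \<Rightarrow> 'c \<Rightarrow> real) set" where
  "Fam C B A = {F. (\<forall>y\<in>Pow C. \<forall>c\<in>A. F y c \<ge> 0) \<and>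
                  (\<forall>y\<in>Pow C. \<forall>c\<in>A. c \<notin> y \<longrightarrow> F y c = 0) \<and>
                  (\<forall>y\<in>Pow C. y \<inter> A \<noteq> {} \<longrightarrow> (\<Sum>c\<in>A \<inter> y. F y c) = real (B y))}"

definition Supp :: "'c set \<Rightarrow> ('c set \<Rightarrow> 'c \<Rightarrow> real) \<Rightarrow> 'c \<Rightarrow> real" where
  "Supp C F c = (\<Sum>y\<in>Pow C. F y c)"

definition maxMin :: "'c set \<Rightarrow> ('c set \<Rightarrow> nat) \<Rightarrow> 'c set \<Rightarrow> real" where
  "maxMin C B A = (SUP F\<in>Fam C B A. Min (Supp C F ` A))"

definition FamOpt :: "'c set \<Rightarrow> ('c set \<Rightarrow> nat) \<Rightarrow> 'c set \<Rightarrow> ('c set \<Rightarrow> 'c \<Rightarrow> real) set" where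
  "FamOpt C B A = {F\<in>Fam C B A. \<forall>c\<in>A. Supp C F c \<ge> maxMin C B A}"

definition ODH_run :: "'c set \<Rightarrow> nat \<Rightarrow> ('c set \<Rightarrow> nat) \<Rightarrow> 'c list \<Rightarrow> bool" where
  "ODH_run C S B ws \<longleftrightarrow> length ws = S \<and>
     (\<forall>i<S. let Ce = set (take i ws) in
        ws ! i \<in> C - Ce \<and>
        (\<exists>s :: 'c \<Rightarrow> real.
           (\<forall>c\<in>C - Ce. \<exists>F\<in>FamOpt C B (Ce \<union> {c}). s c = Supp C F c) \<and>
           (\<forall>c\<in>C - Ce. s c \<le> s (ws ! i))))"

end

theory Submission
  imports Defs
begin

text \<open>
  Write \<open>N(X)\<close> for the number of voters whose ballot meets \<open>X\<close>. A weighted Hall theorem shows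
  that \<open>t \<le> maxMin(\<sigma>, A)\<close> as soon as \<open>t |X| \<le> N(X)\<close> for all \<open>X \<subseteq> A\<close>; conversely \<open>maxMin(\<sigma>, A)\<close>
  satisfies these inequalities, with equality for some nonempty \<open>X\<close>. Let \<open>t\<close> be the claimed bound.
  Adding \<open>c\<close> to any \<open>D \<subseteq> C\<^sub>e\<^sup>i\<close> preserves the inequalities, since the ballots \<open>y\<^sub>j\<close> all contain \<open>c\<close>
  and are shared by at most \<open>|C\<^sub>e\<^sup>i \<inter> \<Union>y\<^sub>j| + 1\<close> candidates. By induction along the run they hold
  on every \<open>C\<^sub>e\<^sup>j\<close>: the winner \<open>w\<close> of round \<open>j\<close> scores at least the score of \<open>c\<close>, which is at
  least \<open>maxMin(\<sigma>, C\<^sub>e\<^sup>j \<union> {c}) \<ge> t\<close>, and a tight set of \<open>C\<^sub>e\<^sup>j \<union> {w}\<close> then shows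
  \<open>maxMin(\<sigma>, C\<^sub>e\<^sup>j \<union> {w}) \<ge> t\<close>.
\<close>

section \<open>Allocations and neighbourhood weights\<close>

lemma sum_fun_upd:
  fixes f :: "'a \<Rightarrow> 'b::ab_group_add"
  assumes "finite S"
  shows "sum (f(a := v)) S = (if a \<in> S then sum f S - f a + v else sum f S)"
proof (cases "a \<in> S")
  case True
  have "sum (f(a := v)) (S - {a}) = sum f (S - {a})"
    by (rule sum.cong) auto
  then show ?thesis
    using True sum.remove[OF assms True, of "f(a := v)"] sum.remove[OF assms True, of f]
    by (simp add: algebra_simps)
next
  case False
  then have "sum (f(a := v)) S = sum f S"
    by (intro sum.cong) auto
  then show ?thesis using False by simp
qed

definition nbhd_weight :: "'c set \<Rightarrow> ('c set \<Rightarrow> real) \<Rightarrow> 'c set \<Rightarrow> real" where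
  "nbhd_weight C b X = (\<Sum>y\<in>{y\<in>Pow C. y \<inter> X \<noteq> {}}. b y)"

text \<open>The family \<open>Fam\<close> with real ballot weights, which the induction below needs since it
  lowers weights by real amounts.\<close>

definition allocation :: "'c set \<Rightarrow> ('c set \<Rightarrow> real) \<Rightarrow> 'c set \<Rightarrow> ('c set \<Rightarrow> 'c \<Rightarrow> real) \<Rightarrow> bool" where
  "allocation C b A F \<longleftrightarrow> (\<forall>y\<in>Pow C. \<forall>c\<in>A. 0 \<le> F y c) \<and>
     (\<forall>y\<in>Pow C. \<forall>c\<in>A. c \<notin> y \<longrightarrow> F y c = 0) \<and>
     (\<forall>y\<in>Pow C. y \<inter> A \<noteq> {} \<longrightarrow> (\<Sum>c\<in>A \<inter> y. F y c) = b y)"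

definition hall_condition :: "'c set \<Rightarrow> ('c set \<Rightarrow> real) \<Rightarrow> ('c \<Rightarrow> real) \<Rightarrow> 'c set \<Rightarrow> bool" where
  "hall_condition C b d A \<longleftrightarrow> (\<forall>X\<subseteq>A. sum d X \<le> nbhd_weight C b X)"

lemma nbhd_weight_empty [simp]: "nbhd_weight C b {} = 0"
  by (simp add: nbhd_weight_def)

lemma nbhd_weight_nonneg: "(\<And>y. 0 \<le> b y) \<Longrightarrow> 0 \<le> nbhd_weight C b X"
  unfolding nbhd_weight_def by (rule sum_nonneg)

lemma nbhd_weight_singleton_pos:
  assumes "0 < nbhd_weight C b {a}"
  obtains y where "y \<in> Pow C" "a \<in> y" "0 < b y"
proof -
  obtain y where "y \<in> {y\<in>Pow C. y \<inter> {a} \<noteq> {}}" "0 < b y"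
    using assms unfolding nbhd_weight_def by (meson not_le sum_nonpos)
  then show thesis using that by auto
qed

lemma nbhd_weight_fun_upd:
  assumes "finite C" "y0 \<in> Pow C"
  shows "nbhd_weight C (b(y0 := v)) X =
           (if y0 \<inter> X \<noteq> {} then nbhd_weight C b X - b y0 + v else nbhd_weight C b X)"
  unfolding nbhd_weight_def using assms by (subst sum_fun_upd) auto

lemma nbhd_weight_Un_disjoint:
  assumes "finite C" "Z \<inter> X = {}"
  shows "nbhd_weight C b (Z \<union> X) =
           nbhd_weight C b X + nbhd_weight C (\<lambda>y. if y \<inter> X = {} then b y else 0) Z"
proof -
  have "{y\<in>Pow C. y \<inter> (Z \<union> X) \<noteq> {}} =
          {y\<in>Pow C. y \<inter> X \<noteq> {}} \<union> {y\<in>Pow C. y \<inter> Z \<noteq> {} \<and> y \<inter> X = {}}"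
    by blast
  then have "nbhd_weight C b (Z \<union> X) =
               nbhd_weight C b X + (\<Sum>y\<in>{y\<in>Pow C. y \<inter> Z \<noteq> {} \<and> y \<inter> X = {}}. b y)"
    unfolding nbhd_weight_def using assms(1) by (simp add: sum.union_disjoint disjoint_iff)
  also have "(\<Sum>y\<in>{y\<in>Pow C. y \<inter> Z \<noteq> {} \<and> y \<inter> X = {}}. b y) =
               nbhd_weight C (\<lambda>y. if y \<inter> X = {} then b y else 0) Z"
    unfolding nbhd_weight_def using assms(1) by (simp add: sum.If_cases, intro sum.cong) auto
  finally show ?thesis .
qed

lemma nbhd_weight_restrict:
  assumes "Z \<subseteq> X"
  shows "nbhd_weight C (\<lambda>y. if y \<inter> X \<noteq> {} then b y else 0) Z = nbhd_weight C b Z"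
  unfolding nbhd_weight_def by (rule sum.cong) (use assms in auto)

lemma allocationD:
  assumes "allocation C b A F" "y \<in> Pow C"
  shows "c \<in> A \<Longrightarrow> 0 \<le> F y c"
    and "c \<in> A \<Longrightarrow> c \<notin> y \<Longrightarrow> F y c = 0"
    and "y \<inter> A \<noteq> {} \<Longrightarrow> (\<Sum>c\<in>A \<inter> y. F y c) = b y"
  using assms unfolding allocation_def by blast+

lemma allocation_exists:
  assumes "finite C" "\<forall>y. 0 \<le> b y"
  shows "\<exists>F. allocation C b A F"
proof -
  define g where "g y = (SOME x. x \<in> A \<inter> y)" for y
  define F where "F y x = (if x \<in> y \<and> x = g y then b y else 0)" for y x
  have "(\<Sum>c\<in>A \<inter> y. F y c) = b y" if "y \<in> Pow C" "y \<inter> A \<noteq> {}" for y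
  proof -
    have "g y \<in> A \<inter> y" unfolding g_def using that(2) by (metis Int_commute ex_in_conv someI)
    moreover have "finite (A \<inter> y)" using that(1) assms(1) finite_subset by blast
    moreover have "(\<Sum>c\<in>A \<inter> y. F y c) = (\<Sum>c\<in>A \<inter> y. if c = g y then b y else 0)"
      unfolding F_def by (rule sum.cong) auto
    ultimately show ?thesis by simp
  qed
  then have "allocation C b A F"
    using assms(2) unfolding allocation_def F_def by auto
  then show ?thesis by blast
qed

lemma allocation_Supp_nonneg: "allocation C b A F \<Longrightarrow> x \<in> A \<Longrightarrow> 0 \<le> Supp C F x"
  unfolding Supp_def allocation_def by (auto intro!: sum_nonneg)

lemma Supp_fun_upd:
  assumes "finite C" "y0 \<in> Pow C"
  shows "Supp C (F(y0 := (F y0)(a := v))) x =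
           (if x = a then Supp C F x - F y0 a + v else Supp C F x)"
proof -
  have "(\<lambda>y. (F(y0 := (F y0)(a := v))) y x) = (\<lambda>y. F y x)(y0 := ((F y0)(a := v)) x)"
    by auto
  then have "Supp C (F(y0 := (F y0)(a := v))) x = Supp C F x - F y0 x + ((F y0)(a := v)) x"
    unfolding Supp_def using assms by (simp only: sum_fun_upd finite_Pow_iff) simp
  then show ?thesis by (cases "x = a") simp_all
qed

lemma sum_Supp_le_nbhd_weight:
  assumes "finite C" "finite A" "allocation C b A F" "X \<subseteq> A"
  shows "(\<Sum>x\<in>X. Supp C F x) \<le> nbhd_weight C b X"
proof -
  have finX: "finite X" using assms(2,4) by (rule finite_subset[rotated])
  have ballot: "(\<Sum>x\<in>X. F y x) \<le> (if y \<inter> X \<noteq> {} then b y else 0)" if y: "y \<in> Pow C" for y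
  proof (cases "y \<inter> X = {}")
    case True
    then have "(\<Sum>x\<in>X. F y x) = 0"
      using allocationD(2)[OF assms(3) y] assms(4) by (intro sum.neutral) auto
    then show ?thesis using True by simp
  next
    case False
    have "(\<Sum>x\<in>X. F y x) = (\<Sum>x\<in>X \<inter> y. F y x)"
      using allocationD(2)[OF assms(3) y] assms(4) by (intro sum.mono_neutral_right finX) auto
    also have "\<dots> \<le> (\<Sum>x\<in>A \<inter> y. F y x)"
      using allocationD(1)[OF assms(3) y] assms(2,4) by (intro sum_mono2) auto
    also have "\<dots> = b y"
      using allocationD(3)[OF assms(3) y] False assms(4) by auto
    finally show ?thesis using False by simp
  qed
  have "(\<Sum>x\<in>X. Supp C F x) = (\<Sum>y\<in>Pow C. \<Sum>x\<in>X. F y x)"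
    unfolding Supp_def by (rule sum.swap)
  also have "\<dots> \<le> (\<Sum>y\<in>Pow C. if y \<inter> X \<noteq> {} then b y else 0)"
    using ballot by (rule sum_mono)
  also have "\<dots> = nbhd_weight C b X"
    unfolding nbhd_weight_def using assms(1) by (intro sum.inter_filter[symmetric]) simp
  finally show ?thesis .
qed

section \<open>A weighted Hall theorem\<close>

definition hall_instance :: "'c set \<Rightarrow> ('c set \<Rightarrow> real) \<Rightarrow> ('c \<Rightarrow> real) \<Rightarrow> 'c set \<Rightarrow> bool" where
  "hall_instance C b d A \<longleftrightarrow> A \<subseteq> C \<and> (\<forall>y. 0 \<le> b y) \<and> (\<forall>x. 0 \<le> d x) \<and> hall_condition C b d A"

definition demands_met :: "'c set \<Rightarrow> ('c set \<Rightarrow> real) \<Rightarrow> ('c \<Rightarrow> real) \<Rightarrow> 'c set \<Rightarrow> bool" where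
  "demands_met C b d A \<longleftrightarrow> (\<exists>F. allocation C b A F \<and> (\<forall>x\<in>A. d x \<le> Supp C F x))"

definition hall_size :: "'c set \<Rightarrow> ('c set \<Rightarrow> real) \<Rightarrow> ('c \<Rightarrow> real) \<Rightarrow> 'c set \<Rightarrow> nat" where
  "hall_size C b d A = card A + card {x\<in>A. 0 < d x} + card {y\<in>Pow C. 0 < b y \<and> y \<inter> A \<noteq> {}}"

text \<open>A tight set \<open>X\<close> uses up all ballots meeting it, so the instance separates into \<open>X\<close>
  served by those ballots and \<open>A - X\<close> served by the remaining ones.\<close>

lemma hall_instance_split:
  assumes "finite C" "hall_instance C b d A" "X \<subseteq> A" "sum d X = nbhd_weight C b X"
  shows "hall_instance C (\<lambda>y. if y \<inter> X \<noteq> {} then b y else 0) d X"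
    and "hall_instance C (\<lambda>y. if y \<inter> X = {} then b y else 0) d (A - X)"
proof -
  have AC: "A \<subseteq> C" and hall: "\<And>Z. Z \<subseteq> A \<Longrightarrow> sum d Z \<le> nbhd_weight C b Z"
    using assms(2) by (auto simp: hall_instance_def hall_condition_def)
  have finA: "finite A" using AC assms(1) finite_subset by blast
  show "hall_instance C (\<lambda>y. if y \<inter> X \<noteq> {} then b y else 0) d X"
    using assms(2,3) hall
    by (auto simp: hall_instance_def hall_condition_def nbhd_weight_restrict)
  have "sum d Z \<le> nbhd_weight C (\<lambda>y. if y \<inter> X = {} then b y else 0) Z" if Z: "Z \<subseteq> A - X" for Z
  proof -
    have "Z \<inter> X = {}" using Z by blast
    then have "sum d (Z \<union> X) = sum d Z + sum d X"
      using finA Z assms(3) by (intro sum.union_disjoint) (auto intro: finite_subset)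
    moreover have "sum d (Z \<union> X) \<le> nbhd_weight C b (Z \<union> X)"
      using Z assms(3) by (intro hall) auto
    ultimately show ?thesis
      using nbhd_weight_Un_disjoint[OF assms(1) \<open>Z \<inter> X = {}\<close>, of b] assms(4) by linarith
  qed
  then show "hall_instance C (\<lambda>y. if y \<inter> X = {} then b y else 0) d (A - X)"
    using assms(2) by (auto simp: hall_instance_def hall_condition_def)
qed

lemma hall_size_split:
  assumes "finite C" "A \<subseteq> C" "X \<subseteq> A" "X \<noteq> {}" "X \<noteq> A"
  shows "hall_size C (\<lambda>y. if y \<inter> X \<noteq> {} then b y else 0) d X < hall_size C b d A"
    and "hall_size C (\<lambda>y. if y \<inter> X = {} then b y else 0) d (A - X) < hall_size C b d A"
proof -
  have finA: "finite A" using assms(1,2) finite_subset by blast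
  have fin: "finite {y\<in>Pow C. 0 < b y \<and> y \<inter> A \<noteq> {}}" using assms(1) by simp
  have "card X < card A" "card (A - X) < card A"
    using assms(3-5) finA by (auto intro!: psubset_card_mono)
  moreover have "card {x\<in>X. 0 < d x} \<le> card {x\<in>A. 0 < d x}"
    "card {x\<in>A - X. 0 < d x} \<le> card {x\<in>A. 0 < d x}"
    using assms(3) finA by (auto intro!: card_mono)
  moreover have
    "card {y\<in>Pow C. 0 < (if y \<inter> X \<noteq> {} then b y else 0) \<and> y \<inter> X \<noteq> {}} \<le> card {y\<in>Pow C. 0 < b y \<and> y \<inter> A \<noteq> {}}"
    "card {y\<in>Pow C. 0 < (if y \<inter> X = {} then b y else 0) \<and> y \<inter> (A - X) \<noteq> {}} \<le> card {y\<in>Pow C. 0 < b y \<and> y \<inter> A \<noteq> {}}"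
    using fin assms(3) by (auto intro!: card_mono split: if_splits)
  ultimately show "hall_size C (\<lambda>y. if y \<inter> X \<noteq> {} then b y else 0) d X < hall_size C b d A"
    and "hall_size C (\<lambda>y. if y \<inter> X = {} then b y else 0) d (A - X) < hall_size C b d A"
    unfolding hall_size_def by linarith+
qed

lemma demands_met_combine:
  assumes "finite A" "X \<subseteq> A"
    and "demands_met C (\<lambda>y. if y \<inter> X \<noteq> {} then b y else 0) d X"
    and "demands_met C (\<lambda>y. if y \<inter> X = {} then b y else 0) d (A - X)"
  shows "demands_met C b d A"
proof -
  obtain F1 where F1: "allocation C (\<lambda>y. if y \<inter> X \<noteq> {} then b y else 0) X F1"
    "\<forall>x\<in>X. d x \<le> Supp C F1 x"
    using assms(3) by (auto simp: demands_met_def)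
  obtain F2 where F2: "allocation C (\<lambda>y. if y \<inter> X = {} then b y else 0) (A - X) F2"
    "\<forall>x\<in>A - X. d x \<le> Supp C F2 x"
    using assms(4) by (auto simp: demands_met_def)
  define F where "F y x = (if x \<in> X then F1 y x else F2 y x)" for y x
  have "(\<Sum>c\<in>A \<inter> y. F y c) = b y" if y: "y \<in> Pow C" "y \<inter> A \<noteq> {}" for y
  proof -
    have split: "A \<inter> y = (X \<inter> y) \<union> ((A - X) \<inter> y)" using assms(2) by blast
    have "(\<Sum>c\<in>A \<inter> y. F y c) = (\<Sum>c\<in>X \<inter> y. F y c) + (\<Sum>c\<in>(A - X) \<inter> y. F y c)"
      by (subst split, rule sum.union_disjoint) (use assms finite_subset in auto)
    also have "(\<Sum>c\<in>X \<inter> y. F y c) = (\<Sum>c\<in>X \<inter> y. F1 y c)"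
      unfolding F_def by (auto intro: sum.cong)
    also have "(\<Sum>c\<in>(A - X) \<inter> y. F y c) = (\<Sum>c\<in>(A - X) \<inter> y. F2 y c)"
      unfolding F_def by (auto intro: sum.cong)
    also have "(\<Sum>c\<in>X \<inter> y. F1 y c) = (if y \<inter> X \<noteq> {} then b y else 0)"
      using F1(1) y(1) by (cases "y \<inter> X = {}") (auto simp: allocation_def Int_commute)
    also have "(\<Sum>c\<in>(A - X) \<inter> y. F2 y c) = (if y \<inter> X = {} then b y else 0)"
      using F2(1) y by (cases "y \<inter> (A - X) = {}") (auto simp: allocation_def Int_commute)
    finally show ?thesis by simp
  qed
  then have "allocation C b A F"
    using F1(1) F2(1) assms(2) unfolding allocation_def F_def by auto
  moreover have "Supp C F x = (if x \<in> X then Supp C F1 x else Supp C F2 x)" for x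
    unfolding Supp_def F_def by simp
  ultimately show ?thesis
    using F1(2) F2(2) unfolding demands_met_def by auto
qed

lemma demands_met_split:
  assumes "finite C" "hall_instance C b d A"
    and "X \<subseteq> A" "X \<noteq> {}" "X \<noteq> A" "sum d X = nbhd_weight C b X"
    and "\<And>b' d' A'. hall_instance C b' d' A' \<Longrightarrow> hall_size C b' d' A' < hall_size C b d A \<Longrightarrow>
           demands_met C b' d' A'"
  shows "demands_met C b d A"
proof -
  have "A \<subseteq> C" using assms(2) by (simp add: hall_instance_def)
  then show ?thesis
    using demands_met_combine[OF finite_subset[OF _ assms(1)] assms(3)]
      hall_instance_split[OF assms(1,2,3,6)] hall_size_split[OF assms(1) _ assms(3-5)] assms(7)
    by blast
qed

lemma demands_met_transfer:
  assumes "finite C" "y0 \<in> Pow C" "a \<in> y0" "a \<in> A" "0 \<le> \<theta>"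
    and "demands_met C (b(y0 := b y0 - \<theta>)) (d(a := d a - \<theta>)) A"
  shows "demands_met C b d A"
proof -
  obtain F' where F': "allocation C (b(y0 := b y0 - \<theta>)) A F'"
    "\<forall>x\<in>A. (d(a := d a - \<theta>)) x \<le> Supp C F' x"
    using assms(6) by (auto simp: demands_met_def)
  define F where "F = F'(y0 := (F' y0)(a := F' y0 a + \<theta>))"
  have "(\<Sum>c\<in>A \<inter> y0. F y0 c) = b y0"
  proof -
    have "finite (A \<inter> y0)" using assms(1,2) finite_subset by blast
    moreover have "(\<Sum>c\<in>A \<inter> y0. F' y0 c) = b y0 - \<theta>"
      using F'(1) assms(2-4) by (auto simp: allocation_def)
    moreover have "F y0 = (F' y0)(a := F' y0 a + \<theta>)" by (simp add: F_def)
    ultimately show ?thesis using assms(3,4) by (simp only: sum_fun_upd) simp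
  qed
  then have "allocation C b A F"
    using F'(1) assms(3,5) unfolding allocation_def F_def by auto
  moreover have "\<forall>x\<in>A. d x \<le> Supp C F x"
    using F'(2) Supp_fun_upd[OF assms(1,2), of F' a] by (auto simp: F_def split: if_splits)
  ultimately show ?thesis unfolding demands_met_def by blast
qed

lemma hall_instance_transfer:
  assumes "finite C" "hall_instance C b d A" "y0 \<in> Pow C" "a \<in> y0" "a \<in> A"
    and "0 \<le> \<theta>" "\<theta> \<le> b y0" "\<theta> \<le> d a"
    and slack: "\<And>X. X \<subseteq> A \<Longrightarrow> a \<notin> X \<Longrightarrow> y0 \<inter> X \<noteq> {} \<Longrightarrow> \<theta> + sum d X \<le> nbhd_weight C b X"
  shows "hall_instance C (b(y0 := b y0 - \<theta>)) (d(a := d a - \<theta>)) A"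
proof -
  have AC: "A \<subseteq> C" and hall: "\<And>X. X \<subseteq> A \<Longrightarrow> sum d X \<le> nbhd_weight C b X"
    and "\<forall>y. 0 \<le> b y" "\<forall>x. 0 \<le> d x"
    using assms(2) unfolding hall_instance_def hall_condition_def by blast+
  have "sum (d(a := d a - \<theta>)) X \<le> nbhd_weight C (b(y0 := b y0 - \<theta>)) X" if X: "X \<subseteq> A" for X
  proof -
    have "finite X" using X AC assms(1) by (meson finite_subset subset_trans)
    then have "sum (d(a := d a - \<theta>)) X = (if a \<in> X then sum d X - \<theta> else sum d X)"
      by (simp only: sum_fun_upd) simp
    moreover have "nbhd_weight C (b(y0 := b y0 - \<theta>)) X =
        (if y0 \<inter> X \<noteq> {} then nbhd_weight C b X - \<theta> else nbhd_weight C b X)"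
      by (simp only: nbhd_weight_fun_upd[OF assms(1,3)]) simp
    moreover have "a \<in> X \<Longrightarrow> y0 \<inter> X \<noteq> {}" using assms(4) by blast
    ultimately show ?thesis
      using hall[OF X] slack[OF X] by (cases "a \<in> X"; cases "y0 \<inter> X = {}") simp_all
  qed
  moreover have "\<forall>y. 0 \<le> (b(y0 := b y0 - \<theta>)) y" "\<forall>x. 0 \<le> (d(a := d a - \<theta>)) x"
    using assms(7,8) \<open>\<forall>y. 0 \<le> b y\<close> \<open>\<forall>x. 0 \<le> d x\<close> by simp_all
  ultimately show ?thesis
    using AC unfolding hall_instance_def hall_condition_def by blast
qed

lemma hall_size_transfer:
  assumes "finite C" "A \<subseteq> C" "y0 \<in> Pow C" "a \<in> y0" "a \<in> A" "0 < \<theta>"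
  shows "hall_size C (b(y0 := b y0 - \<theta>)) (d(a := d a - \<theta>)) A \<le> hall_size C b d A"
    and "\<theta> = b y0 \<or> \<theta> = d a \<Longrightarrow>
           hall_size C (b(y0 := b y0 - \<theta>)) (d(a := d a - \<theta>)) A < hall_size C b d A"
proof -
  let ?Pd = "\<lambda>d. {x\<in>A. 0 < d x}" and ?Pb = "\<lambda>b. {y\<in>Pow C. 0 < b y \<and> y \<inter> A \<noteq> {}}"
  have "finite A" using assms(1,2) finite_subset by blast
  then have fin: "finite (?Pd d)" "finite (?Pb b)"
    using assms(1) by auto
  have sub: "?Pd (d(a := d a - \<theta>)) \<subseteq> ?Pd d" "?Pb (b(y0 := b y0 - \<theta>)) \<subseteq> ?Pb b"
    using assms(6) by auto
  have le: "card (?Pd (d(a := d a - \<theta>))) \<le> card (?Pd d)"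
    "card (?Pb (b(y0 := b y0 - \<theta>))) \<le> card (?Pb b)"
    using card_mono[OF fin(1) sub(1)] card_mono[OF fin(2) sub(2)] .
  then show "hall_size C (b(y0 := b y0 - \<theta>)) (d(a := d a - \<theta>)) A \<le> hall_size C b d A"
    unfolding hall_size_def by linarith
  assume "\<theta> = b y0 \<or> \<theta> = d a"
  then have "card (?Pd (d(a := d a - \<theta>))) < card (?Pd d) \<or> card (?Pb (b(y0 := b y0 - \<theta>))) < card (?Pb b)"
  proof
    assume "\<theta> = b y0"
    then have "y0 \<in> ?Pb b - ?Pb (b(y0 := b y0 - \<theta>))" using assms(3-6) by auto
    then show ?thesis using psubset_card_mono[OF fin(2)] sub(2) by blast
  next
    assume "\<theta> = d a"
    then have "a \<in> ?Pd d - ?Pd (d(a := d a - \<theta>))" using assms(5,6) by auto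
    then show ?thesis using psubset_card_mono[OF fin(1)] sub(1) by blast
  qed
  then show "hall_size C (b(y0 := b y0 - \<theta>)) (d(a := d a - \<theta>)) A < hall_size C b d A"
    using le unfolding hall_size_def by linarith
qed

lemma transfer_amount_exists:
  assumes "finite A" "0 < b y0" "0 < d a"
    and loose: "\<And>X. X \<subseteq> A \<Longrightarrow> a \<notin> X \<Longrightarrow> y0 \<inter> X \<noteq> {} \<Longrightarrow> sum d X < nbhd_weight C b X"
  obtains \<theta> where "0 < \<theta>" "\<theta> \<le> b y0" "\<theta> \<le> d a"
    "\<And>X. X \<subseteq> A \<Longrightarrow> a \<notin> X \<Longrightarrow> y0 \<inter> X \<noteq> {} \<Longrightarrow> \<theta> + sum d X \<le> nbhd_weight C b X"
    "\<theta> = b y0 \<or> \<theta> = d a \<or>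
       (\<exists>X\<subseteq>A. a \<notin> X \<and> y0 \<inter> X \<noteq> {} \<and> \<theta> + sum d X = nbhd_weight C b X)"
proof -
  define Q where "Q = {X. X \<subseteq> A \<and> a \<notin> X \<and> y0 \<inter> X \<noteq> {}}"
  define M where "M = insert (b y0) (insert (d a) ((\<lambda>X. nbhd_weight C b X - sum d X) ` Q))"
  define \<theta> where "\<theta> = Min M"
  have "Q \<subseteq> Pow A" unfolding Q_def by blast
  then have "finite Q" by (rule finite_subset) (simp add: assms(1))
  then have "finite M" by (simp add: M_def)
  have \<theta>_le: "\<theta> \<le> x" if "x \<in> M" for x
    unfolding \<theta>_def using \<open>finite M\<close> that by (rule Min_le)
  have "\<theta> \<in> M" unfolding \<theta>_def using \<open>finite M\<close> by (rule Min_in) (simp add: M_def)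
  have "0 < nbhd_weight C b X - sum d X" if "X \<in> Q" for X
    using that loose unfolding Q_def by auto
  then have "0 < x" if "x \<in> M" for x
    using that assms(2,3) unfolding M_def by blast
  show thesis
  proof (rule that[of \<theta>])
    show "0 < \<theta>" using \<open>\<theta> \<in> M\<close> \<open>\<And>x. x \<in> M \<Longrightarrow> 0 < x\<close> by blast
    show "\<theta> \<le> b y0" "\<theta> \<le> d a" using \<theta>_le unfolding M_def by simp_all
    fix X assume "X \<subseteq> A" "a \<notin> X" "y0 \<inter> X \<noteq> {}"
    then show "\<theta> + sum d X \<le> nbhd_weight C b X"
      using \<theta>_le[of "nbhd_weight C b X - sum d X"] unfolding M_def Q_def by simp
  next
    have "\<theta> = b y0 \<or> \<theta> = d a \<or> (\<exists>X\<in>Q. \<theta> = nbhd_weight C b X - sum d X)"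
      using \<open>\<theta> \<in> M\<close> unfolding M_def by blast
    then show "\<theta> = b y0 \<or> \<theta> = d a \<or>
        (\<exists>X\<subseteq>A. a \<notin> X \<and> y0 \<inter> X \<noteq> {} \<and> \<theta> + sum d X = nbhd_weight C b X)"
    proof (elim disjE)
      assume "\<exists>X\<in>Q. \<theta> = nbhd_weight C b X - sum d X"
      then obtain X where "X \<in> Q" "\<theta> = nbhd_weight C b X - sum d X" ..
      then have "X \<subseteq> A \<and> a \<notin> X \<and> y0 \<inter> X \<noteq> {} \<and> \<theta> + sum d X = nbhd_weight C b X"
        unfolding Q_def by simp
      then show ?thesis by blast
    qed simp_all
  qed
qed

text \<open>Shift \<open>\<theta>\<close> units of the weight of a ballot \<open>y0 \<ni> a\<close> onto the demand of \<open>a\<close>, with \<open>\<theta>\<close>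
  as large as Hall's condition allows: then either a positive weight or demand drops to zero, or
  a proper subset becomes tight and the instance splits.\<close>

lemma demands_met_by_transfer:
  assumes fin: "finite C" and inst: "hall_instance C b d A" and a: "a \<in> A" "0 < d a"
    and loose: "\<And>X. X \<subseteq> A \<Longrightarrow> X \<noteq> {} \<Longrightarrow> X \<noteq> A \<Longrightarrow> sum d X < nbhd_weight C b X"
    and IH: "\<And>b' d' A'. hall_instance C b' d' A' \<Longrightarrow> hall_size C b' d' A' < hall_size C b d A \<Longrightarrow>
               demands_met C b' d' A'"
  shows "demands_met C b d A"
proof -
  have AC: "A \<subseteq> C" and hall: "\<And>X. X \<subseteq> A \<Longrightarrow> sum d X \<le> nbhd_weight C b X"
    using inst unfolding hall_instance_def hall_condition_def by blast+
  have "0 < nbhd_weight C b {a}" using hall[of "{a}"] a by simp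
  then obtain y0 where y0: "y0 \<in> Pow C" "a \<in> y0" "0 < b y0" by (rule nbhd_weight_singleton_pos)
  have loose': "sum d X < nbhd_weight C b X" if "X \<subseteq> A" "a \<notin> X" "y0 \<inter> X \<noteq> {}" for X
    using loose that a(1) by blast
  obtain \<theta> where \<theta>: "0 < \<theta>" "\<theta> \<le> b y0" "\<theta> \<le> d a"
    and slack: "\<And>X. X \<subseteq> A \<Longrightarrow> a \<notin> X \<Longrightarrow> y0 \<inter> X \<noteq> {} \<Longrightarrow> \<theta> + sum d X \<le> nbhd_weight C b X"
    and \<theta>_cases: "\<theta> = b y0 \<or> \<theta> = d a \<or>
       (\<exists>X\<subseteq>A. a \<notin> X \<and> y0 \<inter> X \<noteq> {} \<and> \<theta> + sum d X = nbhd_weight C b X)"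
    using transfer_amount_exists[of A b y0 d a C, OF finite_subset[OF AC fin] y0(3) a(2) loose']
    by blast
  let ?b = "b(y0 := b y0 - \<theta>)" and ?d = "d(a := d a - \<theta>)"
  have inst': "hall_instance C ?b ?d A"
    using hall_instance_transfer[OF fin inst y0(1,2) a(1) less_imp_le[OF \<theta>(1)] \<theta>(2,3) slack] .
  note size = hall_size_transfer[OF fin AC y0(1,2) a(1) \<theta>(1), of b d]
  have "demands_met C ?b ?d A"
  proof (cases "\<theta> = b y0 \<or> \<theta> = d a")
    case True
    then show ?thesis using IH[OF inst' size(2)] by blast
  next
    case False
    then obtain X where X: "X \<subseteq> A" "a \<notin> X" "y0 \<inter> X \<noteq> {}" "\<theta> + sum d X = nbhd_weight C b X"
      using \<theta>_cases by blast
    have "finite X" using X(1) AC fin by (meson finite_subset subset_trans)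
    then have "sum ?d X = sum d X"
      using X(2) by (simp only: sum_fun_upd) simp
    moreover have "nbhd_weight C ?b X = nbhd_weight C b X - \<theta>"
      using X(3) by (simp only: nbhd_weight_fun_upd[OF fin y0(1)]) simp
    ultimately have tight: "sum ?d X = nbhd_weight C ?b X" using X(4) by simp
    have "X \<noteq> {}" "X \<noteq> A" using X(2,3) a(1) by auto
    then show ?thesis
    proof (rule demands_met_split[OF fin inst' X(1) _ _ tight])
      fix b' d' A' assume "hall_instance C b' d' A'" "hall_size C b' d' A' < hall_size C ?b ?d A"
      then show "demands_met C b' d' A'" using IH size(1) by (meson less_le_trans)
    qed
  qed
  then show ?thesis
    by (rule demands_met_transfer[OF fin y0(1,2) a(1) less_imp_le[OF \<theta>(1)]])
qed

lemma demands_met_step: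
  assumes fin: "finite C" and inst: "hall_instance C b d A"
    and IH: "\<And>b' d' A'. hall_instance C b' d' A' \<Longrightarrow> hall_size C b' d' A' < hall_size C b d A \<Longrightarrow>
               demands_met C b' d' A'"
  shows "demands_met C b d A"
proof -
  have hall: "\<And>X. X \<subseteq> A \<Longrightarrow> sum d X \<le> nbhd_weight C b X" and "\<forall>y. 0 \<le> b y"
    using inst unfolding hall_instance_def hall_condition_def by blast+
  consider (tight) X where "X \<subseteq> A" "X \<noteq> {}" "X \<noteq> A" "sum d X = nbhd_weight C b X"
    | (loose) "\<And>X. X \<subseteq> A \<Longrightarrow> X \<noteq> {} \<Longrightarrow> X \<noteq> A \<Longrightarrow> sum d X < nbhd_weight C b X"
    using hall by (meson order_le_less)
  then show ?thesis
  proof cases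
    case tight
    then show ?thesis by (rule demands_met_split[OF fin inst _ _ _ _ IH])
  next
    case loose
    show ?thesis
    proof (cases "\<exists>a\<in>A. 0 < d a")
      case True
      then obtain a where "a \<in> A" "0 < d a" ..
      then show ?thesis by (rule demands_met_by_transfer[OF fin inst _ _ loose IH])
    next
      case False
      obtain F where "allocation C b A F" using allocation_exists[OF fin \<open>\<forall>y. 0 \<le> b y\<close>] ..
      then show ?thesis
        using False allocation_Supp_nonneg unfolding demands_met_def by (meson not_le order_trans)
    qed
  qed
qed

theorem hall_demands_met:
  assumes "finite C" "hall_instance C b d A"
  shows "demands_met C b d A"
  using assms(2)
proof (induction "hall_size C b d A" arbitrary: b d A rule: less_induct)
  case less
  then show ?case by (blast intro: demands_met_step[OF assms(1)])
qed

section \<open>maxMin as a minimum density\<close>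

lemma Fam_iff_allocation: "F \<in> Fam C B A \<longleftrightarrow> allocation C (\<lambda>y. real (B y)) A F"
  unfolding Fam_def allocation_def by simp

lemma maxMin_ge_hall:
  assumes "finite C" "A \<subseteq> C" "A \<noteq> {}" "0 \<le> t"
    and "hall_condition C (\<lambda>y. real (B y)) (\<lambda>_. t) A"
  shows "t \<le> maxMin C B A"
proof -
  have finA: "finite A" using assms(1,2) by (rule finite_subset[rotated])
  have "hall_instance C (\<lambda>y. real (B y)) (\<lambda>_. t) A"
    using assms(2,4,5) unfolding hall_instance_def by simp
  then obtain F where F: "F \<in> Fam C B A" "\<forall>x\<in>A. t \<le> Supp C F x"
    using hall_demands_met[OF assms(1)] unfolding demands_met_def Fam_iff_allocation by blast
  obtain a where "a \<in> A" using assms(3) by blast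
  have "bdd_above ((\<lambda>F. Min (Supp C F ` A)) ` Fam C B A)"
  proof (rule bdd_aboveI2)
    fix G assume "G \<in> Fam C B A"
    have "Min (Supp C G ` A) \<le> Supp C G a" using finA \<open>a \<in> A\<close> by simp
    also have "\<dots> \<le> nbhd_weight C (\<lambda>y. real (B y)) {a}"
      using sum_Supp_le_nbhd_weight[OF assms(1) finA, of _ G "{a}"] \<open>G \<in> Fam C B A\<close> \<open>a \<in> A\<close>
      by (simp add: Fam_iff_allocation)
    finally show "Min (Supp C G ` A) \<le> nbhd_weight C (\<lambda>y. real (B y)) {a}" .
  qed
  then have "Min (Supp C F ` A) \<le> maxMin C B A"
    unfolding maxMin_def using F(1) by (rule cSUP_upper2) simp
  moreover have "t \<le> Min (Supp C F ` A)" using F(2) finA assms(3) by simp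
  ultimately show ?thesis by linarith
qed

lemma maxMin_hall_condition:
  assumes "finite C" "A \<subseteq> C"
  shows "hall_condition C (\<lambda>y. real (B y)) (\<lambda>_. maxMin C B A) A"
  unfolding hall_condition_def
proof (intro allI impI)
  fix X assume X: "X \<subseteq> A"
  have finA: "finite A" using assms by (rule finite_subset[rotated])
  show "(\<Sum>_\<in>X. maxMin C B A) \<le> nbhd_weight C (\<lambda>y. real (B y)) X"
  proof (cases "X = {}")
    case False
    have cX: "0 < real (card X)" using False finite_subset[OF X finA] by (simp add: card_gt_0_iff)
    obtain F0 where "allocation C (\<lambda>y. real (B y)) A F0" using allocation_exists[OF assms(1)] by fastforce
    then have "Fam C B A \<noteq> {}" by (auto simp: Fam_iff_allocation)
    then have "maxMin C B A \<le> nbhd_weight C (\<lambda>y. real (B y)) X / real (card X)"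
      unfolding maxMin_def
    proof (rule cSUP_least)
      fix F assume F: "F \<in> Fam C B A"
      have "real (card X) * Min (Supp C F ` A) \<le> (\<Sum>x\<in>X. Supp C F x)"
        using finA X False by (intro sum_bounded_below) auto
      also have "\<dots> \<le> nbhd_weight C (\<lambda>y. real (B y)) X"
        using F X by (intro sum_Supp_le_nbhd_weight[OF assms(1) finA]) (simp_all add: Fam_iff_allocation)
      finally show "Min (Supp C F ` A) \<le> nbhd_weight C (\<lambda>y. real (B y)) X / real (card X)"
        using cX by (simp add: field_simps)
    qed
    then show ?thesis using cX by (simp add: field_simps)
  qed simp
qed

lemma hall_condition_mono:
  assumes "hall_condition C b d' A" "\<And>x. x \<in> A \<Longrightarrow> d x \<le> d' x"
  shows "hall_condition C b d A"
  unfolding hall_condition_def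
proof (intro allI impI)
  fix X assume "X \<subseteq> A"
  then have "sum d X \<le> sum d' X" using assms(2) by (intro sum_mono) auto
  also have "\<dots> \<le> nbhd_weight C b X" using assms(1) \<open>X \<subseteq> A\<close> unfolding hall_condition_def by blast
  finally show "sum d X \<le> nbhd_weight C b X" .
qed

lemma maxMin_tight_set:
  assumes "finite C" "A \<subseteq> C" "A \<noteq> {}"
  obtains X where "X \<subseteq> A" "X \<noteq> {}"
    "real (card X) * maxMin C B A = nbhd_weight C (\<lambda>y. real (B y)) X"
proof -
  let ?N = "nbhd_weight C (\<lambda>y. real (B y))"
  define \<rho> where "\<rho> X = ?N X / real (card X)" for X
  define XX where "XX = {X. X \<subseteq> A \<and> X \<noteq> {}}"
  have finA: "finite A" using assms(1,2) by (rule finite_subset[rotated])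
  then have "finite XX" unfolding XX_def by simp
  moreover have "XX \<noteq> {}" unfolding XX_def using assms(3) by blast
  ultimately have "Min (\<rho> ` XX) \<in> \<rho> ` XX" by simp
  then obtain Xs where Xs: "Xs \<in> XX" "Min (\<rho> ` XX) = \<rho> Xs" by blast
  have Xs_min: "\<rho> Xs \<le> \<rho> X" if "X \<in> XX" for X
    unfolding Xs(2)[symmetric] using \<open>finite XX\<close> that by simp
  have cXs: "0 < real (card Xs)"
    using Xs(1) finA unfolding XX_def by (auto simp: card_gt_0_iff intro: finite_subset)
  have "0 \<le> \<rho> Xs" unfolding \<rho>_def by (simp add: nbhd_weight_nonneg)
  moreover have "hall_condition C (\<lambda>y. real (B y)) (\<lambda>_. \<rho> Xs) A"
    unfolding hall_condition_def
  proof (intro allI impI)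
    fix X assume "X \<subseteq> A"
    show "(\<Sum>_\<in>X. \<rho> Xs) \<le> ?N X"
    proof (cases "X = {}")
      case False
      then have "0 < real (card X)" using \<open>X \<subseteq> A\<close> finA by (auto simp: card_gt_0_iff intro: finite_subset)
      then show ?thesis using Xs_min[of X] \<open>X \<subseteq> A\<close> False by (simp add: XX_def \<rho>_def field_simps)
    qed simp
  qed
  ultimately have "\<rho> Xs \<le> maxMin C B A" by (rule maxMin_ge_hall[OF assms])
  moreover have "real (card Xs) * maxMin C B A \<le> ?N Xs"
    using maxMin_hall_condition[OF assms(1,2), of B] Xs(1) unfolding hall_condition_def XX_def by simp
  ultimately have "real (card Xs) * maxMin C B A = ?N Xs"
    using cXs unfolding \<rho>_def by (simp add: field_simps)
  then show ?thesis using that Xs(1) unfolding XX_def by blast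
qed

text \<open>Take a tight set \<open>X\<close> of \<open>insert w A\<close>, so that \<open>N(X) = |X| maxMin\<close>. If \<open>w \<notin> X\<close>, Hall's
  condition on \<open>A\<close> gives \<open>N(X) \<ge> t |X|\<close>; otherwise summing the supports of \<open>Fw\<close> over \<open>X\<close> gives
  \<open>N(X) \<ge> t + (|X| - 1) maxMin\<close>.\<close>

lemma maxMin_insert_ge:
  assumes fin: "finite C" and "A \<subseteq> C" "w \<in> C"
    and hall: "hall_condition C (\<lambda>y. real (B y)) (\<lambda>_. t) A"
    and Fw: "Fw \<in> FamOpt C B (insert w A)" "t \<le> Supp C Fw w"
  shows "t \<le> maxMin C B (insert w A)"
proof -
  let ?m = "maxMin C B (insert w A)" and ?N = "nbhd_weight C (\<lambda>y. real (B y))"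
  have wA: "insert w A \<subseteq> C" using assms(2,3) by simp
  have finA: "finite (insert w A)" using fin wA by (rule finite_subset[rotated])
  obtain X where X: "X \<subseteq> insert w A" "X \<noteq> {}" "real (card X) * ?m = ?N X"
    using maxMin_tight_set[OF fin wA] by blast
  have finX: "finite X" using finA X(1) by (rule finite_subset[rotated])
  have cX: "0 < real (card X)" using X(2) finX by (simp add: card_gt_0_iff)
  show ?thesis
  proof (cases "w \<in> X")
    case False
    then have "real (card X) * t \<le> ?N X"
      using hall X(1) unfolding hall_condition_def by (simp add: subset_insert)
    then show ?thesis using X(3) mult_left_le_imp_le[OF _ cX] by simp
  next
    case True
    have alloc: "allocation C (\<lambda>y. real (B y)) (insert w A) Fw"
      and opt: "\<And>x. x \<in> insert w A \<Longrightarrow> ?m \<le> Supp C Fw x"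
      using Fw(1) unfolding FamOpt_def Fam_iff_allocation by auto
    have "real (card (X - {w})) * ?m \<le> (\<Sum>x\<in>X - {w}. Supp C Fw x)"
      using opt X(1) by (intro sum_bounded_below) auto
    then have "t + real (card (X - {w})) * ?m \<le> (\<Sum>x\<in>X. Supp C Fw x)"
      using Fw(2) sum.remove[OF finX True, of "Supp C Fw"] by simp
    also have "\<dots> \<le> ?N X" by (rule sum_Supp_le_nbhd_weight[OF fin finA alloc X(1)])
    finally show ?thesis
      using X(3) card.remove[OF finX True] by (simp add: algebra_simps)
  qed
qed

section \<open>Hall's condition along an ODH run\<close>

lemma nbhd_weight_insert_ge:
  assumes "finite C" "Y \<subseteq> Pow C" "\<forall>y\<in>Y. c \<in> y" "\<And>y. 0 \<le> b y"
  shows "(\<Sum>y\<in>Y. b y) + nbhd_weight C b (U - \<Union>Y) \<le> nbhd_weight C b (insert c U)"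
proof -
  let ?SU = "{y\<in>Pow C. y \<inter> (U - \<Union>Y) \<noteq> {}}"
  have finY: "finite Y" using assms(1,2) by (meson finite_Pow_iff finite_subset)
  have "Y \<inter> ?SU = {}" by blast
  then have "(\<Sum>y\<in>Y. b y) + nbhd_weight C b (U - \<Union>Y) = (\<Sum>y\<in>Y \<union> ?SU. b y)"
    unfolding nbhd_weight_def using finY assms(1) by (simp add: sum.union_disjoint)
  also have "\<dots> \<le> nbhd_weight C b (insert c U)"
    unfolding nbhd_weight_def using assms by (intro sum_mono2) auto
  finally show ?thesis .
qed

text \<open>Every ballot of \<open>Y\<close> contains \<open>c\<close>, so a set \<open>X \<ni> c\<close> draws on all of \<open>Y\<close>; only \<open>c\<close> and the
  members of \<open>X\<close> in \<open>\<Union>Y\<close> compete for it, while the rest of \<open>X\<close> is covered by Hall's condition on \<open>D\<close>.\<close>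

lemma hall_condition_insert:
  assumes fin: "finite C" "finite E" and "D \<subseteq> E" and Y: "Y \<subseteq> Pow C" "\<forall>y\<in>Y. c \<in> y"
    and b: "\<And>y. 0 \<le> b y" and "0 \<le> t"
    and bound: "t * (real (card (E \<inter> \<Union>Y)) + 1) \<le> (\<Sum>y\<in>Y. b y)"
    and hall: "hall_condition C b (\<lambda>_. t) D"
  shows "hall_condition C b (\<lambda>_. t) (insert c D)"
  unfolding hall_condition_def
proof (intro allI impI)
  fix X assume X: "X \<subseteq> insert c D"
  show "(\<Sum>_\<in>X. t) \<le> nbhd_weight C b X"
  proof (cases "c \<in> X")
    case False
    then show ?thesis using hall X unfolding hall_condition_def by (simp add: subset_insert)
  next
    case True
    define U where "U = X - {c}"
    have X_eq: "X = insert c U" and "c \<notin> U" using True unfolding U_def by blast+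
    have UD: "U \<subseteq> D" using X unfolding U_def by blast
    have finU: "finite U" using fin(2) UD \<open>D \<subseteq> E\<close> by (meson finite_subset order_trans)
    have card_X: "real (card X) = real (card (U \<inter> \<Union>Y)) + real (card (U - \<Union>Y)) + 1"
      using card_Int_Diff[OF finU, of "\<Union>Y"] X_eq \<open>c \<notin> U\<close> finU by simp
    have "card (U \<inter> \<Union>Y) \<le> card (E \<inter> \<Union>Y)" using UD \<open>D \<subseteq> E\<close> fin(2) by (intro card_mono) auto
    then have "t * (real (card (U \<inter> \<Union>Y)) + 1) \<le> t * (real (card (E \<inter> \<Union>Y)) + 1)"
      using \<open>0 \<le> t\<close> by (intro mult_left_mono) simp_all
    also have "\<dots> \<le> (\<Sum>y\<in>Y. b y)" by (rule bound)
    finally have "t * (real (card (U \<inter> \<Union>Y)) + 1) \<le> (\<Sum>y\<in>Y. b y)" .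
    moreover have "(\<Sum>_\<in>U - \<Union>Y. t) \<le> nbhd_weight C b (U - \<Union>Y)"
      using hall UD unfolding hall_condition_def by (meson Diff_subset order_trans)
    moreover have "(\<Sum>y\<in>Y. b y) + nbhd_weight C b (U - \<Union>Y) \<le> nbhd_weight C b X"
      unfolding X_eq by (rule nbhd_weight_insert_ge[OF fin(1) Y b])
    ultimately have "t * real (card X) \<le> nbhd_weight C b X"
      unfolding card_X by (simp add: distrib_left mult.commute)
    then show ?thesis by (simp add: mult.commute)
  qed
qed

lemma ODH_run_set_subset: "ODH_run C S B ws \<Longrightarrow> set ws \<subseteq> C"
proof
  fix x assume "ODH_run C S B ws" "x \<in> set ws"
  then obtain j where "j < S" "x = ws ! j" unfolding ODH_run_def by (metis in_set_conv_nth)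
  then show "x \<in> C" using \<open>ODH_run C S B ws\<close> unfolding ODH_run_def Let_def by blast
qed

lemma ODH_run_step:
  assumes "ODH_run C S B ws" "j < S"
  obtains s :: "'c \<Rightarrow> real" where "ws ! j \<in> C - set (take j ws)"
    "\<And>x. x \<in> C - set (take j ws) \<Longrightarrow> \<exists>F\<in>FamOpt C B (insert x (set (take j ws))). s x = Supp C F x"
    "\<And>x. x \<in> C - set (take j ws) \<Longrightarrow> s x \<le> s (ws ! j)"
proof -
  have "ws ! j \<in> C - set (take j ws) \<and>
      (\<exists>s :: 'c \<Rightarrow> real. (\<forall>x\<in>C - set (take j ws). \<exists>F\<in>FamOpt C B (set (take j ws) \<union> {x}). s x = Supp C F x) \<and>
        (\<forall>x\<in>C - set (take j ws). s x \<le> s (ws ! j)))"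
    using assms unfolding ODH_run_def Let_def by blast
  then show thesis using that by simp blast
qed

lemma ODH_run_hall_condition:
  assumes fin: "finite C" and run: "ODH_run C S B ws" and "i \<le> S" "c \<in> C - set (take i ws)" "0 \<le> t"
    and insert_c: "\<And>A. A \<subseteq> set (take i ws) \<Longrightarrow> hall_condition C (\<lambda>y. real (B y)) (\<lambda>_. t) A \<Longrightarrow>
                     hall_condition C (\<lambda>y. real (B y)) (\<lambda>_. t) (insert c A)"
  shows "hall_condition C (\<lambda>y. real (B y)) (\<lambda>_. t) (set (take i ws))"
proof -
  have "hall_condition C (\<lambda>y. real (B y)) (\<lambda>_. t) (set (take j ws))" if "j \<le> i" for j
    using that
  proof (induction j)
    case 0
    then show ?case by (simp add: hall_condition_def)
  next
    case (Suc j)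
    let ?A = "set (take j ws)" and ?w = "ws ! j"
    have "j < S" using Suc.prems \<open>i \<le> S\<close> by simp
    then have "j < length ws" using run by (simp add: ODH_run_def)
    have AC: "?A \<subseteq> C" using ODH_run_set_subset[OF run] set_take_subset by (rule order_trans[rotated])
    have Ai: "?A \<subseteq> set (take i ws)" using Suc.prems by (intro set_take_subset_set_take) simp
    obtain s where w: "?w \<in> C - ?A"
      and opt: "\<And>x. x \<in> C - ?A \<Longrightarrow> \<exists>F\<in>FamOpt C B (insert x ?A). s x = Supp C F x"
      and best: "\<And>x. x \<in> C - ?A \<Longrightarrow> s x \<le> s ?w"
      using ODH_run_step[OF run \<open>j < S\<close>] by blast
    have c: "c \<in> C - ?A" using assms(4) Ai by auto
    obtain Fc where Fc: "Fc \<in> FamOpt C B (insert c ?A)" "s c = Supp C Fc c" using opt[OF c] by blast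
    obtain Fw where Fw: "Fw \<in> FamOpt C B (insert ?w ?A)" "s ?w = Supp C Fw ?w" using opt[OF w] by blast
    have "hall_condition C (\<lambda>y. real (B y)) (\<lambda>_. t) (insert c ?A)"
      using insert_c[OF Ai] Suc by simp
    then have "t \<le> maxMin C B (insert c ?A)"
      using AC c \<open>0 \<le> t\<close> by (intro maxMin_ge_hall[OF fin]) auto
    also have "\<dots> \<le> Supp C Fc c" using Fc(1) unfolding FamOpt_def by simp
    also have "\<dots> \<le> s ?w" using Fc(2) best[OF c] by simp
    finally have "t \<le> maxMin C B (insert ?w ?A)"
      using maxMin_insert_ge[OF fin AC _ _ Fw(1)] w Fw(2) Suc by simp
    then have "hall_condition C (\<lambda>y. real (B y)) (\<lambda>_. t) (insert ?w ?A)"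
      using AC w by (intro hall_condition_mono[OF maxMin_hall_condition[OF fin]]) simp_all
    then show ?case using \<open>j < length ws\<close> by (simp add: take_Suc_conv_app_nth)
  qed
  then show ?thesis by simp
qed

theorem lemma5:
  fixes V :: "'v set" and C :: "'c set" and S :: nat and B :: "'c set \<Rightarrow> nat"
    and ws :: "'c list" and i :: nat and c :: 'c and Y :: "'c set set"
  assumes "election V C S B"
    and "ODH_run C S B ws"
    and "i < S"
    and "c \<in> C - set (take i ws)"
    and "Y \<subseteq> Pow C"
    and "\<forall>y\<in>Y. c \<in> y"
  shows "maxMin C B (set (take i ws) \<union> {c}) \<ge>
           (\<Sum>y\<in>Y. real (B y)) / (real (card (set (take i ws) \<inter> \<Union>Y)) + 1)"
proof -
  let ?E = "set (take i ws)" and ?b = "\<lambda>y. real (B y)"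
  define t where "t = (\<Sum>y\<in>Y. ?b y) / (real (card (?E \<inter> \<Union>Y)) + 1)"
  have fin: "finite C" using assms(1) by (simp add: election_def)
  have EC: "?E \<subseteq> C" using ODH_run_set_subset[OF assms(2)] set_take_subset by (rule order_trans[rotated])
  have "0 \<le> t" unfolding t_def by (simp add: sum_nonneg)
  have bound: "t * (real (card (?E \<inter> \<Union>Y)) + 1) \<le> (\<Sum>y\<in>Y. ?b y)"
    unfolding t_def by (simp add: field_simps)
  have insert_c: "hall_condition C ?b (\<lambda>_. t) (insert c A)"
    if "A \<subseteq> ?E" "hall_condition C ?b (\<lambda>_. t) A" for A
    using hall_condition_insert[OF fin _ that(1) assms(5,6) _ \<open>0 \<le> t\<close> bound that(2)] by simp
  have "hall_condition C ?b (\<lambda>_. t) ?E"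
    by (rule ODH_run_hall_condition[OF fin assms(2) less_imp_le[OF assms(3)] assms(4) \<open>0 \<le> t\<close> insert_c])
  then have "hall_condition C ?b (\<lambda>_. t) (insert c ?E)" by (rule insert_c[OF order_refl])
  then have "t \<le> maxMin C B (insert c ?E)"
    using EC assms(4) \<open>0 \<le> t\<close> by (intro maxMin_ge_hall[OF fin]) auto
  then show ?thesis unfolding t_def by simp
qed

end
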